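(* Let $n\ge 1$ be an integer and suppose that $A\subseteq\mathbb{Z}_5^n$ is a sum-free subset of size $|A|>\frac32\cdot5^{n-1}$. If $H<\mathbb{Z}_5^n$ is a maximal proper subgroup such that every $H$-coset $g+H$ satisfies $|A\cap(g+H)|<\frac12|H|$, then there is at most one $H$-coset $g+H$ with $|A\cap(g+H)|>\frac25|H|$.
   Context: $\mathbb{Z}_5^n$ denotes the elementary abelian $5$-group of rank $n$. A subset $S$ of an abelian group is sum-free if there are no $x,y,z\in S$ (not necessarily distinct) with $x+y=z$. *)

theory Defs
  imports "HOL-Analysis.Analysis" "HOL-Library.Numeral_Type"
begin

text \<open>The group Z_5^n is modelled as the type 5 ^ 'n (vectors indexed by a finite
type 'n with CARD('n) = n, with entries in the ring Z/5Z = type 5).\<close>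

definition sum_free :: "'a::plus set \<Rightarrow> bool" where
  "sum_free S \<longleftrightarrow> \<not> (\<exists>x\<in>S. \<exists>y\<in>S. \<exists>z\<in>S. x + y = z)"

definition add_subgroup :: "'a::ab_group_add set \<Rightarrow> bool" where
  "add_subgroup H \<longleftrightarrow> 0 \<in> H \<and> (\<forall>x\<in>H. \<forall>y\<in>H. x + y \<in> H) \<and> (\<forall>x\<in>H. - x \<in> H)"

definition maximal_proper_subgroup :: "'a::ab_group_add set \<Rightarrow> bool" where
  "maximal_proper_subgroup H \<longleftrightarrow> add_subgroup H \<and> H \<noteq> UNIV \<and>
     (\<forall>K. add_subgroup K \<and> H \<subseteq> K \<longrightarrow> K = H \<or> K = UNIV)"

definition coset :: "'a::plus \<Rightarrow> 'a set \<Rightarrow> 'a set" where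
  "coset g H = (\<lambda>h. g + h) ` H"

end

theory Submission
  imports Defs
begin

text \<open>Fix \<open>p \<notin> H\<close>; the \<open>H\<close>-cosets are \<open>c p + H\<close> for \<open>c \<in> \<int>\<^sub>5\<close>,
  and let \<open>a\<^sub>c = |A \<inter> (c p + H)|\<close>. If \<open>a\<^sub>c > 0\<close> and \<open>a\<^sub>d > 2|H|/5\<close>, the sumset
  \<open>X + Y\<close> of the two slices of \<open>A\<close> lies in the coset \<open>(c + d) p + H\<close> and misses \<open>A\<close>.
  By Hamidoune's isoperimetric method some subgroup \<open>K\<close> satisfies
  \<open>|X + Y| - |X| \<ge> |K + Y| - |K|\<close> (or \<open>X + Y\<close> fills the coset); since \<open>K + Y\<close> is a
  union of \<open>K\<close>-cosets and all orders are powers of 5, this is at least \<open>2|H|/5\<close>.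
  Together with \<open>a\<^sub>c < |H|/2\<close> this gives \<open>a\<^sub>c\<^sub>+\<^sub>d + a\<^sub>c \<le> 3|H|/5\<close>. For two heavy
  classes \<open>i \<noteq> j\<close> these inequalities force \<open>j = -i\<close>, and then the five classes
  \<open>0, \<plusminus>i, \<plusminus>2i\<close> carry fewer than \<open>7|H|/5 < |A|\<close> elements.\<close>

section \<open>Cosets and translates\<close>

lemma
  assumes "add_subgroup H"
  shows add_subgroup_zero: "0 \<in> H"
    and add_subgroup_add: "x \<in> H \<Longrightarrow> y \<in> H \<Longrightarrow> x + y \<in> H"
    and add_subgroup_uminus: "x \<in> H \<Longrightarrow> - x \<in> H"
    and add_subgroup_diff: "x \<in> H \<Longrightarrow> y \<in> H \<Longrightarrow> x - y \<in> H"
  using assms unfolding add_subgroup_def by (metis diff_conv_add_uminus)+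

lemma add_subgroup_set_plus_self:
  assumes "add_subgroup H" and "X \<subseteq> H" and "X \<noteq> {}"
  shows "X + H = H"
proof
  show "X + H \<subseteq> H"
    using assms by (auto simp: set_plus_def add_subgroup_add)
  obtain x where x: "x \<in> X" using assms(3) by blast
  show "H \<subseteq> X + H"
  proof
    fix h assume "h \<in> H"
    then have "x + (h - x) \<in> X + H"
      using assms x by (blast intro: add_subgroup_diff)
    then show "h \<in> X + H" by simp
  qed
qed

lemma add_subgroup_if_translation_closed:
  assumes "0 \<in> K" and closed: "\<And>x. x \<in> K \<Longrightarrow> (+) x ` K = K"
  shows "add_subgroup K"
  unfolding add_subgroup_def
proof (intro conjI ballI)
  fix x y assume "x \<in> K" "y \<in> K"
  then show "x + y \<in> K" using closed by blast
next
  fix x assume "x \<in> K"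
  then obtain y where "y \<in> K" "x + y = 0"
    using closed[of x] \<open>0 \<in> K\<close> by (metis imageE)
  then show "- x \<in> K" by (metis add.commute add_eq_0_iff)
qed (fact \<open>0 \<in> K\<close>)

lemma card_translate: "card ((+) a ` X) = card (X :: 'a::cancel_semigroup_add set)"
  by (rule card_image) (simp add: inj_on_def)

lemma translate_set_plus: "(+) a ` X + Y = (+) a ` (X + (Y :: 'a::ab_semigroup_add set))"
  by (force simp: set_plus_def add.assoc)

lemma translate_set_plus_both:
  "(+) a ` X + (+) b ` Y = (+) (a + b) ` (X + (Y :: 'a::ab_semigroup_add set))"
  by (force simp: set_plus_def ac_simps)

lemma uminus_uminus_image [simp]: "uminus ` uminus ` (B :: 'a::group_add set) = B"
  by (auto simp: image_iff)

lemma uminus_image_set_plus: "uminus ` (X + Y) = uminus ` X + uminus ` (Y :: 'a::ab_group_add set)"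
  by (force simp: set_plus_def image_iff add.commute)

lemma add_subgroup_uminus_image: "add_subgroup K \<Longrightarrow> uminus ` K = K"
  unfolding add_subgroup_def by (force simp: image_iff)

lemma mem_coset_iff: "x \<in> coset g H \<longleftrightarrow> x - g \<in> (H :: 'a::ab_group_add set)"
  unfolding coset_def by (metis add_diff_cancel_left' diff_add_cancel image_iff)

lemma card_coset: "card (coset g (H :: 'a::ab_group_add set)) = card H"
  unfolding coset_def by (rule card_translate)

lemma coset_self: "add_subgroup H \<Longrightarrow> g \<in> coset g H"
  by (simp add: mem_coset_iff add_subgroup_zero)

lemma coset_eq_iff:
  assumes "add_subgroup H"
  shows "coset a H = coset b H \<longleftrightarrow> a - b \<in> H"
proof
  assume "coset a H = coset b H"
  then show "a - b \<in> H" using coset_self[OF assms, of a] by (simp add: mem_coset_iff)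
next
  assume ab: "a - b \<in> H"
  have "x - a \<in> H \<longleftrightarrow> x - b \<in> H" for x
    using add_subgroup_add[OF assms _ ab, of "x - a"] add_subgroup_diff[OF assms _ ab, of "x - b"]
    by auto
  then show "coset a H = coset b H" by (auto simp: mem_coset_iff)
qed

lemma cosets_disjoint:
  assumes "add_subgroup H" and "coset a H \<noteq> coset b H"
  shows "coset a H \<inter> coset b H = {}"
proof (rule ccontr)
  assume "coset a H \<inter> coset b H \<noteq> {}"
  then obtain x where "x - a \<in> H" "x - b \<in> H" by (auto simp: mem_coset_iff)
  then have "a - b \<in> H" using add_subgroup_diff[OF assms(1), of "x - b" "x - a"] by simp
  then show False using assms by (simp add: coset_eq_iff)
qed

lemma card_union_of_cosets:
  assumes "add_subgroup K" and "finite T" and "T + K \<subseteq> T"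
  shows "card T = card K * card ((\<lambda>t. coset t K) ` T)"
proof -
  have "\<Union> ((\<lambda>t. coset t K) ` T) = T"
  proof
    show "\<Union> ((\<lambda>t. coset t K) ` T) \<subseteq> T"
      using assms(3) by (auto simp: coset_def set_plus_def)
    show "T \<subseteq> \<Union> ((\<lambda>t. coset t K) ` T)"
      using coset_self[OF assms(1)] by blast
  qed
  moreover have "card K * card ((\<lambda>t. coset t K) ` T) = card (\<Union> ((\<lambda>t. coset t K) ` T))"
  proof (rule card_partition)
    show "\<And>c1 c2. c1 \<in> (\<lambda>t. coset t K) ` T \<Longrightarrow> c2 \<in> (\<lambda>t. coset t K) ` T \<Longrightarrow>
        c1 \<noteq> c2 \<Longrightarrow> c1 \<inter> c2 = {}"
      using cosets_disjoint[OF assms(1)] by blast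
  qed (use assms calculation in \<open>auto simp: card_coset\<close>)
  ultimately show ?thesis by simp
qed

corollary card_subgroup_dvd_periodic:
  "add_subgroup K \<Longrightarrow> finite T \<Longrightarrow> T + K \<subseteq> T \<Longrightarrow> card K dvd card T"
  by (metis card_union_of_cosets dvd_triv_left)

lemma card_subgroup_dvd_set_plus:
  assumes "add_subgroup K" "finite (K + Y)"
  shows "card K dvd card (K + Y)"
proof -
  have "K + K = K"
    using add_subgroup_set_plus_self[OF assms(1) order_refl] add_subgroup_zero[OF assms(1)] by blast
  then have "(K + Y) + K = K + Y"
    by (metis add.assoc add.commute)
  then show ?thesis
    using assms card_subgroup_dvd_periodic by fastforce
qed

lemma card_le_card_set_plus:
  fixes X Y :: "'a::ab_group_add set"
  assumes "finite (X + Y)" "y \<in> Y"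
  shows "card X \<le> card (X + Y)"
proof -
  have "X + {y} \<subseteq> X + Y"
    using assms(2) by (intro set_plus_mono2) auto
  then show ?thesis
    using card_mono[OF assms(1)] card_plus_sing[of X y] by metis
qed

section \<open>Hamidoune's isoperimetric method\<close>

definition excess :: "'a::plus set \<Rightarrow> 'a set \<Rightarrow> int" where
  "excess B X = int (card (X + B)) - int (card X)"

lemma excess_translate:
  "excess B ((+) c ` X) = excess B (X :: 'a::{cancel_semigroup_add, ab_semigroup_add} set)"
  by (simp add: excess_def translate_set_plus card_translate)

locale finite_add_subgroup =
  fixes S :: "'a::ab_group_add set"
  assumes subgroup_S: "add_subgroup S" and finite_S: "finite S"
begin

text \<open>The minima are over nonempty families only when \<open>B\<close> is nontrivial.\<close>

definition nontrivial :: "'a set \<Rightarrow> bool" where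
  "nontrivial B \<longleftrightarrow> B \<subseteq> S \<and> B \<noteq> {} \<and> B \<noteq> S"

definition admissible :: "'a set \<Rightarrow> 'a set \<Rightarrow> bool" where
  "admissible B X \<longleftrightarrow> X \<subseteq> S \<and> X \<noteq> {} \<and> X + B \<noteq> S"

definition connectivity :: "'a set \<Rightarrow> int" where
  "connectivity B = Min (excess B ` {X. admissible B X})"

definition fragment :: "'a set \<Rightarrow> 'a set \<Rightarrow> bool" where
  "fragment B X \<longleftrightarrow> admissible B X \<and> excess B X = connectivity B"

definition atom_card :: "'a set \<Rightarrow> nat" where
  "atom_card B = Min (card ` {X. fragment B X})"

lemma finite_subset_S: "X \<subseteq> S \<Longrightarrow> finite X"
  using finite_S finite_subset by blast

lemma set_plus_subset_S: "X \<subseteq> S \<Longrightarrow> B \<subseteq> S \<Longrightarrow> X + B \<subseteq> S"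
  using subgroup_S by (fastforce simp: set_plus_def intro: add_subgroup_add)

lemma finite_admissible: "finite {X. admissible B X}"
  using finite_S
  by (rule finite_subset[OF _ iffD2[OF finite_Pow_iff], rotated]) (auto simp: admissible_def)

lemma finite_fragment: "finite {X. fragment B X}"
  by (rule finite_subset[OF _ finite_admissible[of B]]) (auto simp: fragment_def)

lemma admissible_zero: "nontrivial B \<Longrightarrow> admissible B {0}"
  using subgroup_S by (auto simp: admissible_def nontrivial_def add_subgroup_zero)

lemma connectivity_le: "admissible B X \<Longrightarrow> connectivity B \<le> excess B X"
  unfolding connectivity_def using finite_admissible by (intro Min_le) auto

lemma fragment_exists: "nontrivial B \<Longrightarrow> \<exists>X. fragment B X"
proof -
  assume "nontrivial B"
  then have "connectivity B \<in> excess B ` {X. admissible B X}"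
    unfolding connectivity_def using finite_admissible admissible_zero by (intro Min_in) auto
  then show ?thesis by (auto simp: fragment_def)
qed

lemma atom_card_le: "fragment B X \<Longrightarrow> atom_card B \<le> card X"
  unfolding atom_card_def using finite_fragment by (intro Min_le) auto

lemma atom_exists: "nontrivial B \<Longrightarrow> \<exists>X. fragment B X \<and> card X = atom_card B"
proof -
  assume "nontrivial B"
  then have "atom_card B \<in> card ` {X. fragment B X}"
    unfolding atom_card_def using finite_fragment fragment_exists by (intro Min_in) auto
  then show ?thesis by auto
qed

lemma connectivity_le_card: "nontrivial B \<Longrightarrow> connectivity B \<le> int (card B) - 1"
  using connectivity_le[OF admissible_zero] by (simp add: excess_def)

lemma nontrivial_uminus: "nontrivial B \<Longrightarrow> nontrivial (uminus ` B)"
  using subgroup_S unfolding nontrivial_def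
  by (auto simp: add_subgroup_uminus)

text \<open>The complement of \<open>X + B\<close> plays the role of \<open>X\<close> for \<open>-B\<close>: this duality is what
  makes \<open>B\<close> and \<open>-B\<close> have the same connectivity.\<close>

lemma complement_set_plus_uminus:
  assumes "B \<subseteq> S" "X \<subseteq> S"
  shows "(S - (X + B)) + uminus ` B \<subseteq> S - X"
proof
  fix z assume "z \<in> (S - (X + B)) + uminus ` B"
  then obtain y b where y: "y \<in> S" "y \<notin> X + B" and b: "b \<in> B" and z: "z = y - b"
    by (auto elim!: set_plus_elim)
  have "z \<notin> X"
    using y b z by (metis diff_add_cancel set_plus_intro)
  moreover have "z \<in> S" using y b z assms subgroup_S by (blast intro: add_subgroup_diff)
  ultimately show "z \<in> S - X" by simp
qed

lemma admissible_complement: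
  assumes "B \<subseteq> S" "admissible B X"
  shows "admissible (uminus ` B) (S - (X + B))"
  using assms complement_set_plus_uminus[OF assms(1)] set_plus_subset_S[OF _ assms(1)]
  unfolding admissible_def by blast

lemma excess_complement_le:
  assumes "B \<subseteq> S" "admissible B X"
  shows "excess (uminus ` B) (S - (X + B)) \<le> excess B X"
proof -
  have X: "X \<subseteq> S" and XB: "X + B \<subseteq> S"
    using assms set_plus_subset_S by (auto simp: admissible_def)
  have "card ((S - (X + B)) + uminus ` B) \<le> card (S - X)"
    using complement_set_plus_uminus[OF assms(1) X] finite_S by (intro card_mono) auto
  moreover have "card (S - X) = card S - card X" "card (S - (X + B)) = card S - card (X + B)"
    using X XB finite_subset_S by (simp_all add: card_Diff_subset)
  moreover have "card X \<le> card S" "card (X + B) \<le> card S"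
    using X XB finite_S by (simp_all add: card_mono)
  ultimately show ?thesis unfolding excess_def by linarith
qed

lemma connectivity_uminus_le:
  assumes "nontrivial B"
  shows "connectivity (uminus ` B) \<le> connectivity B"
proof -
  obtain X where X: "fragment B X" using fragment_exists[OF assms] ..
  have B: "B \<subseteq> S" using assms by (simp add: nontrivial_def)
  have "connectivity (uminus ` B) \<le> excess (uminus ` B) (S - (X + B))"
    using X B by (intro connectivity_le admissible_complement) (auto simp: fragment_def)
  also have "\<dots> \<le> connectivity B"
    using X excess_complement_le[OF B, of X] by (simp add: fragment_def)
  finally show ?thesis .
qed

lemma connectivity_uminus:
  assumes "nontrivial B"
  shows "connectivity (uminus ` B) = connectivity B"
proof -
  have "connectivity B \<le> connectivity (uminus ` B)"
    using connectivity_uminus_le[OF nontrivial_uminus[OF assms]] by (simp only: uminus_uminus_image)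
  then show ?thesis
    using connectivity_uminus_le[OF assms] by linarith
qed

lemma fragment_complement:
  assumes "nontrivial B" "fragment B X"
  shows "fragment (uminus ` B) (S - (X + B))"
proof -
  have B: "B \<subseteq> S" using assms by (simp add: nontrivial_def)
  have adm: "admissible (uminus ` B) (S - (X + B))"
    using assms(2) admissible_complement[OF B] by (simp add: fragment_def)
  have "excess (uminus ` B) (S - (X + B)) \<le> connectivity (uminus ` B)"
    using assms(2) excess_complement_le[OF B, of X] connectivity_uminus[OF assms(1)]
    by (simp add: fragment_def)
  then have "excess (uminus ` B) (S - (X + B)) = connectivity (uminus ` B)"
    using connectivity_le[OF adm] by linarith
  with adm show ?thesis by (simp add: fragment_def)
qed

lemma excess_submodular:
  assumes "X \<subseteq> S" "Y \<subseteq> S" "B \<subseteq> S"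
  shows "excess B (X \<inter> Y) + excess B (X \<union> Y) \<le> excess B X + excess B Y"
proof -
  have fin: "finite X" "finite Y" "finite (X + B)" "finite (Y + B)"
    using assms finite_subset_S set_plus_subset_S by auto
  have "(X \<inter> Y) + B \<subseteq> (X + B) \<inter> (Y + B)"
    by (intro Int_greatest set_plus_mono2) auto
  then have "card ((X \<inter> Y) + B) \<le> card ((X + B) \<inter> (Y + B))"
    using fin by (simp add: card_mono)
  moreover have "card ((X + B) \<union> (Y + B)) + card ((X + B) \<inter> (Y + B)) = card (X + B) + card (Y + B)"
    using fin by (metis card_Un_Int)
  moreover have "card (X \<union> Y) + card (X \<inter> Y) = card X + card Y"
    using fin by (metis card_Un_Int)
  ultimately show ?thesis
    unfolding excess_def Un_set_plus by linarith
qed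

lemma fragment_Int:
  assumes B: "B \<subseteq> S" and "fragment B X" "fragment B Y" "X \<inter> Y \<noteq> {}" "(X \<union> Y) + B \<noteq> S"
  shows "fragment B (X \<inter> Y)"
proof -
  have X: "X \<subseteq> S" "X + B \<noteq> S" and Y: "Y \<subseteq> S"
    and eX: "excess B X = connectivity B" and eY: "excess B Y = connectivity B"
    using assms by (auto simp: fragment_def admissible_def)
  have "(X \<inter> Y) + B \<noteq> S"
    using X set_plus_subset_S[OF X(1) B] set_plus_mono2[of "X \<inter> Y" X B B] by blast
  then have adm: "admissible B (X \<inter> Y)" "admissible B (X \<union> Y)"
    using assms X Y by (auto simp: admissible_def)
  have "excess B (X \<inter> Y) = connectivity B"
    using excess_submodular[OF X(1) Y B] connectivity_le[OF adm(1)] connectivity_le[OF adm(2)] eX eY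
    by linarith
  with adm(1) show ?thesis by (simp add: fragment_def)
qed

lemma fragment_translate:
  assumes "fragment B X" "c \<in> S"
  shows "fragment B ((+) c ` X)"
proof -
  have X: "X \<subseteq> S" "X + B \<noteq> S"
    using assms by (auto simp: fragment_def admissible_def)
  have "(+) c ` S = S"
    using add_subgroup_set_plus_self[OF subgroup_S, of "{c}"] assms(2)
    by (simp add: translation_eq_singleton_plus)
  then have "(+) c ` (X + B) \<noteq> S"
    using X(2) by (metis inj_image_eq_iff inj_on_add)
  moreover have "(+) c ` X \<subseteq> S"
    using X(1) \<open>(+) c ` S = S\<close> by blast
  moreover have "(+) c ` X \<noteq> {}"
    using assms(1) by (simp add: fragment_def admissible_def)
  ultimately show ?thesis
    using assms(1)
    unfolding fragment_def admissible_def excess_translate translate_set_plus by blast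
qed

lemma atom_subset_fragment:
  assumes B: "nontrivial B" and le: "atom_card B \<le> atom_card (uminus ` B)"
    and atom: "fragment B A" "card A = atom_card B"
    and F: "fragment B F" and meet: "A \<inter> F \<noteq> {}"
  shows "A \<subseteq> F"
proof -
  have BS: "B \<subseteq> S" and AS: "A \<subseteq> S"
    using B atom by (auto simp: nontrivial_def fragment_def admissible_def)
  have finA: "finite A" and finAB: "finite (A + B)"
    using AS BS finite_subset_S set_plus_subset_S by auto
  obtain z where z: "z \<in> A" "z \<in> F" using meet by blast
  have zB: "(+) z ` B \<subseteq> A + B" and zF: "(+) z ` B \<subseteq> F + B"
    using z by (auto simp: set_plus_def)
  have "(A \<union> F) + B \<noteq> S"
  proof
    assume cover: "(A \<union> F) + B = S"
    txt \<open>Then the fragment \<open>S - (F + B)\<close> of \<open>-B\<close> would be smaller than the atom \<open>A\<close>.\<close>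
    have "S - (F + B) \<subseteq> (A + B) - (+) z ` B"
      using cover zF by (auto simp: Un_set_plus)
    then have "card (S - (F + B)) \<le> card (A + B) - card B"
      using finAB zB card_mono[OF _ \<open>S - (F + B) \<subseteq> _\<close>]
      by (simp add: card_Diff_subset card_translate finite_subset)
    moreover have "card B \<le> card (A + B)"
      using card_mono[OF finAB zB] by (simp add: card_translate)
    moreover have "int (card (A + B)) - int (card A) \<le> int (card B) - 1"
      using atom connectivity_le_card[OF B] by (simp add: fragment_def excess_def)
    moreover have "atom_card (uminus ` B) \<le> card (S - (F + B))"
      using atom_card_le fragment_complement[OF B F] by blast
    ultimately show False using le atom by linarith
  qed
  then have "fragment B (A \<inter> F)"
    using fragment_Int[OF BS atom(1) F meet] by blast
  then have "card A \<le> card (A \<inter> F)"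
    using atom_card_le atom(2) by metis
  then show ?thesis
    using finA by (metis Int_lower1 card_seteq le_iff_inf)
qed

text \<open>Translating the atom so that it contains \<open>0\<close>, each of its translates by its own elements
  is again a fragment meeting it, hence equal to it.\<close>

lemma subgroup_fragment_if_atom_card_le:
  assumes B: "nontrivial B" and le: "atom_card B \<le> atom_card (uminus ` B)"
  shows "\<exists>K. add_subgroup K \<and> fragment B K"
proof -
  obtain A where A: "fragment B A" "card A = atom_card B"
    using atom_exists[OF B] by blast
  then obtain a where a: "a \<in> A"
    by (auto simp: fragment_def admissible_def)
  have AS: "A \<subseteq> S" using A by (simp add: fragment_def admissible_def)
  define K where "K = (+) (- a) ` A"
  have "- a \<in> S" using a AS subgroup_S by (blast intro: add_subgroup_uminus)
  then have K: "fragment B K" "card K = atom_card B"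
    unfolding K_def card_translate using A fragment_translate[OF A(1)] by blast+
  have KS: "K \<subseteq> S" using K by (simp add: fragment_def admissible_def)
  have "0 \<in> K" unfolding K_def using a by force
  moreover have "(+) x ` K = K" if x: "x \<in> K" for x
  proof -
    have F: "fragment B ((+) x ` K)"
      using x KS by (intro fragment_translate[OF K(1)]) auto
    have "x \<in> K \<inter> (+) x ` K" using x \<open>0 \<in> K\<close> by force
    then have "K \<subseteq> (+) x ` K"
      using atom_subset_fragment[OF B le K F] by blast
    moreover have "finite ((+) x ` K)" using KS finite_subset_S by blast
    ultimately show ?thesis
      by (metis card_seteq card_translate order_refl)
  qed
  ultimately show ?thesis
    using K add_subgroup_if_translation_closed by blast
qed

lemma fragment_uminus_subgroup:
  assumes B: "nontrivial B" and K: "add_subgroup K" "fragment (uminus ` B) K"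
  shows "fragment B K"
proof -
  have KB: "K + B = uminus ` (K + uminus ` B)"
    using K(1) by (simp add: uminus_image_set_plus add_subgroup_uminus_image)
  have KS: "K \<subseteq> S" "K \<noteq> {}" and ne: "K + uminus ` B \<noteq> S"
    and e: "excess (uminus ` B) K = connectivity (uminus ` B)"
    using K by (auto simp: fragment_def admissible_def)
  have "K + B \<noteq> S"
  proof
    assume "K + B = S"
    then have "K + uminus ` B = uminus ` S" by (metis KB uminus_uminus_image)
    also have "\<dots> = S" using subgroup_S by (rule add_subgroup_uminus_image)
    finally show False using ne by contradiction
  qed
  moreover have "excess B K = excess (uminus ` B) K"
    unfolding excess_def KB by (simp add: card_image)
  ultimately show ?thesis
    using KS e connectivity_uminus[OF B] by (simp add: fragment_def admissible_def)
qed

lemma subgroup_fragment_exists: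
  assumes B: "nontrivial B"
  shows "\<exists>K. add_subgroup K \<and> fragment B K"
proof (cases "atom_card B \<le> atom_card (uminus ` B)")
  case True
  then show ?thesis by (rule subgroup_fragment_if_atom_card_le[OF B])
next
  case False
  then obtain K where "add_subgroup K" "fragment (uminus ` B) K"
    using subgroup_fragment_if_atom_card_le[OF nontrivial_uminus[OF B]] by force
  then show ?thesis
    using fragment_uminus_subgroup[OF B] by blast
qed

theorem exists_subgroup_excess_le:
  assumes "nontrivial B" "admissible B X"
  obtains K where "add_subgroup K" "K \<subseteq> S" "K + B \<noteq> S" "excess B K \<le> excess B X"
  using subgroup_fragment_exists[OF assms(1)] connectivity_le[OF assms(2)]
  unfolding fragment_def admissible_def by (metis order_refl)

end

section \<open>Sumsets in cosets of a subgroup of order \<open>5\<^sup>N\<close>\<close>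

lemma five_power_multiple_gap:
  fixes d t N :: nat
  assumes "d dvd t" "d dvd 5 ^ N" "t < 5 ^ N" "2 * 5 ^ N < 5 * t"
  shows "2 * 5 ^ N \<le> 5 * (t - d)"
proof -
  obtain i where "i \<le> N" and d: "d = 5 ^ i"
    using assms(2) by (auto simp: divides_primepow_nat)
  then obtain k where N: "N = i + k" using le_Suc_ex by blast
  obtain m where t: "t = 5 ^ i * m" using assms(1) d by blast
  have "m < 5 ^ k" "2 * 5 ^ k < 5 * m"
    using assms(3,4) unfolding t N power_add by (simp_all add: mult.left_commute)
  then obtain j where "k = Suc j" "2 * 5 ^ j < m"
    by (cases k) auto
  then have "2 * 5 ^ N \<le> 5 ^ i * (5 * (m - 1))"
    unfolding N power_add by simp
  also have "\<dots> = 5 * (t - d)"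
    unfolding t d by (simp add: algebra_simps right_diff_distrib')
  finally show ?thesis .
qed

lemma subgroup_sumset_growth:
  fixes H X Y :: "'a::ab_group_add set"
  assumes H: "add_subgroup H" "card H = 5 ^ N"
    and XY: "X \<subseteq> H" "Y \<subseteq> H" "X \<noteq> {}" "X + Y \<noteq> H"
    and large: "2 * card H < 5 * card Y"
  shows "5 * card X + 2 * card H \<le> 5 * card (X + Y)"
proof -
  have "finite H" by (rule card_ge_0_finite) (simp add: H(2))
  interpret finite_add_subgroup H using H(1) \<open>finite H\<close> by unfold_locales
  have "Y \<noteq> H"
    using XY add_subgroup_set_plus_self[OF H(1)] by blast
  then have "nontrivial Y" "admissible Y X"
    using XY large by (auto simp: nontrivial_def admissible_def)
  then obtain K where K: "add_subgroup K" "K \<subseteq> H" "K + Y \<noteq> H"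
    and le: "excess Y K \<le> excess Y X"
    by (rule exists_subgroup_excess_le)
  have "K + Y \<subset> H"
    using K XY set_plus_subset_S by blast
  then have finKY: "finite (K + Y)" and "card (K + Y) < 5 ^ N"
    using finite_subset_S psubset_card_mono[OF \<open>finite H\<close>] H(2) by auto
  moreover have "K + H = H"
    using add_subgroup_set_plus_self[OF H(1) K(2)] add_subgroup_zero[OF K(1)] by blast
  then have "card K dvd 5 ^ N"
    using card_subgroup_dvd_set_plus[OF K(1), of H] \<open>finite H\<close> H(2) by simp
  moreover have "card Y \<le> card (K + Y)"
    using card_le_card_set_plus[of Y K 0] finKY add_subgroup_zero[OF K(1)]
    by (simp add: add.commute)
  then have "2 * 5 ^ N < 5 * card (K + Y)"
    using large H(2) by linarith
  ultimately have "2 * card H \<le> 5 * (card (K + Y) - card K)"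
    using five_power_multiple_gap card_subgroup_dvd_set_plus[OF K(1) finKY] H(2) by presburger
  moreover obtain y where "y \<in> Y" using large by fastforce
  then have "card K \<le> card (K + Y)"
    using card_le_card_set_plus finKY by blast
  ultimately show ?thesis
    using le by (simp add: excess_def)
qed

lemma coset_sumset_growth:
  fixes H X Y :: "'a::ab_group_add set"
  assumes H: "add_subgroup H" "card H = 5 ^ N"
    and XY: "X \<subseteq> coset u H" "Y \<subseteq> coset v H" "X \<noteq> {}"
    and large: "2 * card H < 5 * card Y"
  shows "X + Y = coset (u + v) H \<or> 5 * card X + 2 * card H \<le> 5 * card (X + Y)"
proof -
  define X' Y' where "X' = (+) (- u) ` X" and "Y' = (+) (- v) ` Y"
  have X: "X = (+) u ` X'" and Y: "Y = (+) v ` Y'"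
    unfolding X'_def Y'_def by (simp_all add: image_image)
  have "X' \<subseteq> H" "Y' \<subseteq> H"
    using XY unfolding X'_def Y'_def by (auto simp: mem_coset_iff)
  moreover have "X' \<noteq> {}"
    using XY unfolding X'_def by simp
  moreover have "card X' = card X" "card Y' = card Y"
    unfolding X'_def Y'_def by (rule card_translate)+
  moreover have "X + Y = (+) (u + v) ` (X' + Y')"
    unfolding X Y by (rule translate_set_plus_both)
  ultimately show ?thesis
    using subgroup_sumset_growth[OF H, of X' Y'] large
    by (cases "X' + Y' = H") (simp_all add: coset_def card_translate)
qed

lemma sum_free_coset_bound:
  fixes A H :: "'a::ab_group_add set"
  assumes A: "sum_free A" and H: "add_subgroup H" "card H = 5 ^ N"
    and u: "A \<inter> coset u H \<noteq> {}" "2 * card (A \<inter> coset u H) < card H"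
    and v: "2 * card H < 5 * card (A \<inter> coset v H)"
  shows "5 * card (A \<inter> coset (u + v) H) + 5 * card (A \<inter> coset u H) \<le> 3 * card H"
proof -
  define X Y Z
    where "X = A \<inter> coset u H" and "Y = A \<inter> coset v H" and "Z = A \<inter> coset (u + v) H"
  have fin: "finite (coset (u + v) H)"
    by (rule card_ge_0_finite) (simp add: card_coset H(2))
  have "(X + Y) \<inter> A = {}"
    using A unfolding X_def Y_def sum_free_def by (auto elim!: set_plus_elim)
  then have disj: "Z \<inter> (X + Y) = {}"
    unfolding Z_def by blast
  have "X + Y \<subseteq> coset (u + v) H"
    unfolding X_def Y_def using H(1)
    by (auto elim!: set_plus_elim simp: mem_coset_iff)
      (metis add_diff_add add_subgroup_add)
  from coset_sumset_growth[OF H, of X u Y v] u v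
  consider "X + Y = coset (u + v) H" | "5 * card X + 2 * card H \<le> 5 * card (X + Y)"
    unfolding X_def Y_def by blast
  then show ?thesis
  proof cases
    case 1
    then have "Z = {}" using disj unfolding Z_def by blast
    then show ?thesis using u unfolding X_def Z_def by simp
  next
    case 2
    have "card Z + card (X + Y) = card (Z \<union> (X + Y))"
      using disj fin \<open>X + Y \<subseteq> _\<close> unfolding Z_def
      by (intro card_Un_disjoint[symmetric]) (auto intro: finite_subset)
    also have "\<dots> \<le> card H"
      using \<open>X + Y \<subseteq> _\<close> fin card_coset[of "u + v" H] unfolding Z_def
      by (metis Int_lower2 card_mono le_sup_iff)
    finally show ?thesis
      using 2 unfolding X_def Z_def by linarith
  qed
qed

section \<open>Maximal subgroups of \<open>\<int>\<^sub>5\<^sup>n\<close>\<close>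

lemma five_cases:
  fixes x :: 5
  obtains "x = 0" | "x = 1" | "x = 2" | "x = 3" | "x = 4"
proof (cases x rule: bit1_cases)
  case (of_int z)
  then have "z = 0 \<or> z = 1 \<or> z = 2 \<or> z = 3 \<or> z = 4" by auto
  then show ?thesis using of_int that by auto
qed

lemma sum_UNIV_5_opposites:
  fixes i j :: 5
  assumes "i \<noteq> 0" "i + j = 0"
  shows "sum a UNIV = a 0 + a i + a j + a (i + i) + a (j + j)"
proof -
  have "distinct [0, i, j, i + i, j + j]"
    using assms by (cases i rule: five_cases; cases j rule: five_cases; simp)
  moreover have "x \<in> set [0, i, j, i + i, j + j]" for x
    using assms
    by (cases x rule: five_cases; cases i rule: five_cases; cases j rule: five_cases; simp)
  then have "UNIV = set [0, i, j, i + i, j + j]" by blast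
  ultimately have "sum a UNIV = sum_list (map a [0, i, j, i + i, j + j])"
    by (metis sum_list_distinct_conv_sum_set)
  then show ?thesis by (simp add: add.assoc)
qed

text \<open>The bound at \<open>(i, j)\<close>, \<open>(j, i)\<close>, \<open>(i, i)\<close>, \<open>(j, j)\<close> forces \<open>j = -i\<close>; the same
  bounds then make the classes \<open>0, \<plusminus>i, \<plusminus>2i\<close> too light to carry the total.\<close>

lemma at_most_one_heavy_class:
  fixes a :: "5 \<Rightarrow> nat" and h :: nat
  assumes bound: "\<And>c d. a c \<noteq> 0 \<Longrightarrow> 2 * h < 5 * a d \<Longrightarrow> 5 * a (c + d) + 5 * a c \<le> 3 * h"
    and total: "3 * h < 2 * sum a UNIV"
    and heavy: "2 * h < 5 * a i" "2 * h < 5 * a j"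
  shows "i = j"
proof (rule ccontr)
  assume "i \<noteq> j"
  have nz: "a i \<noteq> 0" "a j \<noteq> 0" using heavy by auto
  note ij = bound[OF nz(1) heavy(2)] and ii = bound[OF nz(1) heavy(1)]
    and ji = bound[OF nz(2) heavy(1)] and jj = bound[OF nz(2) heavy(2)]
  have "i \<noteq> 0" "j \<noteq> 0" "j \<noteq> i + i" "i \<noteq> j + j"
    using ij ji ii jj heavy by (auto simp: add.commute)
  with \<open>i \<noteq> j\<close> have "i + j = 0"
    by (cases i rule: five_cases; cases j rule: five_cases) simp_all
  then have "5 * a 0 + 5 * a i \<le> 3 * h"
    using ij by simp
  moreover have "sum a UNIV = a 0 + a i + a j + a (i + i) + a (j + j)"
    using sum_UNIV_5_opposites[OF \<open>i \<noteq> 0\<close> \<open>i + j = 0\<close>] .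
  ultimately show False
    using ii jj total heavy by linarith
qed

lemma add_subgroup_smult:
  fixes H :: "(5 ^ 'n) set"
  assumes "add_subgroup H" "x \<in> H"
  shows "c *s x \<in> H"
proof -
  have "of_nat k *s x \<in> H" for k
    by (induction k) (simp_all add: vector_sadd_rdistrib add_subgroup_zero add_subgroup_add assms)
  moreover have "\<exists>k. c = of_nat k"
    by (cases c rule: five_cases) (metis of_nat_0 of_nat_1 of_nat_numeral)+
  ultimately show ?thesis by blast
qed

lemma smult_mem_add_subgroup_iff:
  fixes H :: "(5 ^ 'n) set"
  assumes "add_subgroup H" "c \<noteq> 0"
  shows "c *s x \<in> H \<longleftrightarrow> x \<in> H"
proof
  have "c ^ 3 * c = 1"
    using assms(2) by (cases c rule: five_cases) simp_all
  then have "x = c ^ 3 *s (c *s x)"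
    by (simp add: vector_smult_assoc)
  then show "c *s x \<in> H \<Longrightarrow> x \<in> H"
    using add_subgroup_smult[OF assms(1)] by metis
qed (rule add_subgroup_smult[OF assms(1)])

lemma maximal_subgroup_covered:
  fixes H :: "(5 ^ 'n) set"
  assumes H: "maximal_proper_subgroup H" and p: "p \<notin> H"
  shows "\<exists>c. x \<in> coset (c *s p) H"
proof -
  have sub: "add_subgroup H" using H by (simp add: maximal_proper_subgroup_def)
  define K where "K = {x. \<exists>c. x - c *s p \<in> H}"
  have "add_subgroup K"
    unfolding add_subgroup_def
  proof (intro conjI ballI)
    have "0 - 0 *s p \<in> H" using add_subgroup_zero[OF sub] by simp
    then show "0 \<in> K" unfolding K_def by blast
  next
    fix x y assume "x \<in> K" "y \<in> K"
    then obtain c d where "x - c *s p \<in> H" "y - d *s p \<in> H" by (auto simp: K_def)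
    then have "(x - c *s p) + (y - d *s p) \<in> H" by (rule add_subgroup_add[OF sub])
    also have "(x - c *s p) + (y - d *s p) = (x + y) - (c + d) *s p"
      by (simp add: vector_sadd_rdistrib)
    finally show "x + y \<in> K" unfolding K_def by blast
  next
    fix x assume "x \<in> K"
    then obtain c where "x - c *s p \<in> H" by (auto simp: K_def)
    then have "- (x - c *s p) \<in> H" by (rule add_subgroup_uminus[OF sub])
    also have "- (x - c *s p) = - x - (- c) *s p"
      by (simp add: vector_smult_lneg)
    finally show "- x \<in> K" unfolding K_def by blast
  qed
  moreover have "H \<subseteq> K"
  proof
    fix x assume "x \<in> H"
    then have "x - 0 *s p \<in> H" by simp
    then show "x \<in> K" unfolding K_def by blast
  qed
  moreover have "p \<in> K"
  proof -
    have "p - 1 *s p \<in> H" using add_subgroup_zero[OF sub] by simp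
    then show ?thesis unfolding K_def by blast
  qed
  ultimately have "K = UNIV"
    using H p unfolding maximal_proper_subgroup_def by blast
  then have "x \<in> K" by simp
  then show ?thesis unfolding K_def mem_coset_iff by blast
qed

lemma coset_eq_coset_smult:
  fixes H :: "(5 ^ 'n) set"
  assumes "maximal_proper_subgroup H" "p \<notin> H"
  obtains c where "coset g H = coset (c *s p) H"
  using maximal_subgroup_covered[OF assms, of g] assms(1)
  by (auto simp: coset_eq_iff mem_coset_iff maximal_proper_subgroup_def)

lemma coset_smult_eq_iff:
  fixes H :: "(5 ^ 'n) set"
  assumes "add_subgroup H" "p \<notin> H"
  shows "coset (c *s p) H = coset (d *s p) H \<longleftrightarrow> c = d"
  using smult_mem_add_subgroup_iff[OF assms(1), of "c - d" p] assms
  by (auto simp: coset_eq_iff vector_sub_rdistrib add_subgroup_zero)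

lemma card_eq_sum_cosets:
  fixes A H :: "(5 ^ 'n) set"
  assumes H: "maximal_proper_subgroup H" and p: "p \<notin> H"
  shows "card A = (\<Sum>c\<in>UNIV. card (A \<inter> coset (c *s p) H))"
proof -
  have sub: "add_subgroup H" using H by (simp add: maximal_proper_subgroup_def)
  have "A = (\<Union>c. A \<inter> coset (c *s p) H)"
    using maximal_subgroup_covered[OF H p] by blast
  also have "card \<dots> = (\<Sum>c\<in>UNIV. card (A \<inter> coset (c *s p) H))"
  proof (rule card_UN_disjoint)
    show "\<forall>c\<in>UNIV. \<forall>d\<in>UNIV. c \<noteq> d \<longrightarrow>
        (A \<inter> coset (c *s p) H) \<inter> (A \<inter> coset (d *s p) H) = {}"
      using cosets_disjoint[OF sub] coset_smult_eq_iff[OF sub p] by blast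
  qed simp_all
  finally show ?thesis .
qed

lemma card_maximal_proper_subgroup:
  fixes H :: "(5 ^ 'n) set"
  assumes H: "maximal_proper_subgroup H"
  shows "card H = 5 ^ (CARD('n) - 1)"
proof -
  obtain p where p: "p \<notin> H" using H by (auto simp: maximal_proper_subgroup_def)
  have "5 * 5 ^ (CARD('n) - 1) = (5 :: nat) ^ CARD('n)"
    by (simp flip: power_Suc)
  also have "\<dots> = card (UNIV :: (5 ^ 'n) set)"
    by simp
  also have "\<dots> = (\<Sum>c\<in>UNIV. card (coset (c *s p) H))"
    using card_eq_sum_cosets[OF H p, of UNIV] by simp
  also have "\<dots> = 5 * card H"
    by (simp add: card_coset)
  finally show ?thesis by simp
qed

lemma at_most_one_heavy_coset:
  fixes A H :: "(5 ^ 'n) set"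
  assumes A: "sum_free A" "3 * card H < 2 * card A"
    and H: "maximal_proper_subgroup H"
    and light: "\<And>g. 2 * card (A \<inter> coset g H) < card H"
    and heavy: "2 * card H < 5 * card (A \<inter> coset g1 H)"
      "2 * card H < 5 * card (A \<inter> coset g2 H)"
  shows "coset g1 H = coset g2 H"
proof -
  have sub: "add_subgroup H" and card_H: "card H = 5 ^ (CARD('n) - 1)"
    using H card_maximal_proper_subgroup by (auto simp: maximal_proper_subgroup_def)
  obtain p where p: "p \<notin> H" using H by (auto simp: maximal_proper_subgroup_def)
  obtain i j where i: "coset g1 H = coset (i *s p) H" and j: "coset g2 H = coset (j *s p) H"
    by (metis coset_eq_coset_smult[OF H p])
  define a where "a c = card (A \<inter> coset (c *s p) H)" for c
  have "i = j"
  proof (rule at_most_one_heavy_class[where a = a and h = "card H"])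
    show "5 * a (c + d) + 5 * a c \<le> 3 * card H" if "a c \<noteq> 0" "2 * card H < 5 * a d" for c d
      using sum_free_coset_bound[OF A(1) sub card_H, of "c *s p" "d *s p"] light that
      by (simp add: a_def vector_sadd_rdistrib)
    show "3 * card H < 2 * sum a UNIV"
      using A(2) card_eq_sum_cosets[OF H p, of A] unfolding a_def by simp
    show "2 * card H < 5 * a i" "2 * card H < 5 * a j"
      using heavy i j unfolding a_def by simp_all
  qed
  then show ?thesis using i j by simp
qed

theorem proposition3:
  fixes A H :: "(5 ^ 'n) set"
  assumes "sum_free A"
    and "real (card A) > 3/2 * 5 ^ (CARD('n) - 1)"
    and "maximal_proper_subgroup H"
    and "\<forall>g. real (card (A \<inter> coset g H)) < 1/2 * real (card H)"
  shows "\<forall>g1 g2. real (card (A \<inter> coset g1 H)) > 2/5 * real (card H) \<and>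
                 real (card (A \<inter> coset g2 H)) > 2/5 * real (card H) \<longrightarrow>
                 coset g1 H = coset g2 H"
proof (intro allI impI, elim conjE)
  fix g1 g2
  assume "real (card (A \<inter> coset g1 H)) > 2/5 * real (card H)"
    and "real (card (A \<inter> coset g2 H)) > 2/5 * real (card H)"
  then have heavy: "2 * card H < 5 * card (A \<inter> coset g1 H)"
    "2 * card H < 5 * card (A \<inter> coset g2 H)"
    by simp_all
  have "real (3 * card H) < real (2 * card A)"
    using assms(2) card_maximal_proper_subgroup[OF assms(3)] by simp
  then have large: "3 * card H < 2 * card A"
    by (simp only: of_nat_less_iff)
  have "real (2 * card (A \<inter> coset g H)) < real (card H)" for g
    using assms(4)[rule_format, of g] by simp
  then have light: "2 * card (A \<inter> coset g H) < card H" for g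
    by (simp only: of_nat_less_iff)
  show "coset g1 H = coset g2 H"
    by (rule at_most_one_heavy_coset[OF assms(1) large assms(3) light heavy])
qed

end
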